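(* Let $k'>k$ be natural numbers and let $\mathcal D$ be a class of $k$-ary upwards-closed (not necessarily first-order) dependency notions. Then the $k'$-ary totality atom $\mathrm{All}_{k'}$ is not definable in $\mathbf{FO}(=\!(\cdot),\mathcal D,\sqcup)$.
   Context: Team semantics (lax version). For a structure $\mathfrak M$ with domain $M$, a team $X$ is a (possibly empty) set of assignments $s:V\to M$, $V$ a finite set of variables; for a tuple $\vec v$ of variables in $V$, $X(\vec v)=\{s(\vec v):s\in X\}$. Satisfaction for formulas in negation normal form: first-order literal $\alpha$: every $s\in X$ satisfies $\alpha$ (Tarski); $\psi\vee\theta$: $X=Y\cup Z$ with $\mathfrak M\models_Y\psi$, $\mathfrak M\models_Z\theta$; $\psi\wedge\theta$: both; $\exists v\psi$: some $F:X\to\mathcal P(M)\setminus\{\emptyset\}$ with $\mathfrak M\models_{X[F/v]}\psi$, $X[F/v]=\{s[m/v]:s\in X,m\in F(s)\}$; $\forall v\psi$: $\mathfrak M\models_{X[M/v]}\psi$, $X[M/v]=\{s[m/v]:s\in X,m\in M\}$. A $k$-ary dependency notion $\mathbf D$ is an isomorphism-closed class of structures $(M,R)$ with $R$ a $k$-ary relation; the atom $\mathbf D\vec v$ (for a $k$-tuple $\vec v$ of variables) satisfies $\mathfrak M\models_X\mathbf D\vec v$ iff $(M,X(\vec v))\in\mathbf D$. $\mathbf D$ is upwards-closed if $(M,R)\in\mathbf D$ and $R\subseteq S$ imply $(M,S)\in\mathbf D$. The constancy atoms $=\!(\vec v)$ (all arities): $\mathfrak M\models_X=\!(\vec v)$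 iff $s(\vec v)=s'(\vec v)$ for all $s,s'\in X$. The $k'$-ary totality atom: $\mathfrak M\models_X\mathrm{All}_{k'}(\vec v)$ iff $X(\vec v)=M^{k'}$. Classical disjunction: $\mathfrak M\models_X\phi\sqcup\psi$ iff $\mathfrak M\models_X\phi$ or $\mathfrak M\models_X\psi$. A $k'$-ary dependency $\mathbf E$ is definable in a logic $L$ if there is a formula $\theta(\vec v)$ of $L$ over the empty vocabulary, with $\vec v$ a tuple of $k'$ distinct variables, such that $\mathfrak M\models_X\mathbf E\vec v$ iff $\mathfrak M\models_X\theta(\vec v)$ for all structures $\mathfrak M$ and all teams $X$ whose domain contains $\vec v$. *)

theory Defs
  imports Main
begin

text \<open>Structures over the empty vocabulary are nonempty domains M :: 'a set.\<close>

type_synonym 'a assign = "nat \<Rightarrow> 'a option"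
type_synonym 'a team = "'a assign set"

definition tuples :: "'a set \<Rightarrow> nat \<Rightarrow> 'a list set" where
  "tuples M n = {xs. length xs = n \<and> set xs \<subseteq> M}"

definition is_team :: "'a set \<Rightarrow> nat set \<Rightarrow> 'a team \<Rightarrow> bool" where
  "is_team M V X \<longleftrightarrow> (\<forall>s\<in>X. dom s = V \<and> ran s \<subseteq> M)"

definition team_rel :: "'a team \<Rightarrow> nat list \<Rightarrow> 'a list set" where
  "team_rel X vs = {map (\<lambda>x. the (s x)) vs | s. s \<in> X}"

definition is_dep_notion :: "nat \<Rightarrow> ('a set \<times> 'a list set) set \<Rightarrow> bool" where
  "is_dep_notion k D \<longleftrightarrow>
     (\<forall>M R. (M, R) \<in> D \<longrightarrow> M \<noteq> {} \<and> R \<subseteq> tuples M k) \<and>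
     (\<forall>M R N f. (M, R) \<in> D \<longrightarrow> bij_betw f M N \<longrightarrow> (N, map f ` R) \<in> D)"

definition upwards_closed :: "nat \<Rightarrow> ('a set \<times> 'a list set) set \<Rightarrow> bool" where
  "upwards_closed k D \<longleftrightarrow>
     (\<forall>M R S. (M, R) \<in> D \<longrightarrow> R \<subseteq> S \<longrightarrow> S \<subseteq> tuples M k \<longrightarrow> (M, S) \<in> D)"

text \<open>Formulas of FO(=(.), D, \<squnion>) over the empty vocabulary, in negation normal form.\<close>
datatype 'd fml =
    Eq nat nat
  | NEq nat nat
  | Const "nat list"
  | DAtom 'd "nat list"
  | Or "'d fml" "'d fml"
  | And "'d fml" "'d fml"
  | Ex nat "'d fml"
  | All nat "'d fml"
  | CDisj "'d fml" "'d fml"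

primrec fv :: "'d fml \<Rightarrow> nat set" where
  "fv (Eq x y) = {x, y}"
| "fv (NEq x y) = {x, y}"
| "fv (Const vs) = set vs"
| "fv (DAtom D vs) = set vs"
| "fv (Or a b) = fv a \<union> fv b"
| "fv (And a b) = fv a \<union> fv b"
| "fv (Ex v a) = fv a - {v}"
| "fv (All v a) = fv a - {v}"
| "fv (CDisj a b) = fv a \<union> fv b"

primrec wf_fml :: "nat \<Rightarrow> ('a set \<times> 'a list set) set set
                    \<Rightarrow> ('a set \<times> 'a list set) set fml \<Rightarrow> bool" where
  "wf_fml k \<D> (Eq x y) = True"
| "wf_fml k \<D> (NEq x y) = True"
| "wf_fml k \<D> (Const vs) = True"
| "wf_fml k \<D> (DAtom D vs) = (D \<in> \<D> \<and> length vs = k)"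
| "wf_fml k \<D> (Or a b) = (wf_fml k \<D> a \<and> wf_fml k \<D> b)"
| "wf_fml k \<D> (And a b) = (wf_fml k \<D> a \<and> wf_fml k \<D> b)"
| "wf_fml k \<D> (Ex v a) = wf_fml k \<D> a"
| "wf_fml k \<D> (All v a) = wf_fml k \<D> a"
| "wf_fml k \<D> (CDisj a b) = (wf_fml k \<D> a \<and> wf_fml k \<D> b)"

primrec sat :: "'a set \<Rightarrow> 'a team \<Rightarrow> ('a set \<times> 'a list set) set fml \<Rightarrow> bool" where
  "sat M X (Eq x y) = (\<forall>s\<in>X. s x = s y)"
| "sat M X (NEq x y) = (\<forall>s\<in>X. s x \<noteq> s y)"
| "sat M X (Const vs) = (\<forall>s\<in>X. \<forall>s'\<in>X. map s vs = map s' vs)"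
| "sat M X (DAtom D vs) = ((M, team_rel X vs) \<in> D)"
| "sat M X (Or a b) = (\<exists>Y Z. X = Y \<union> Z \<and> sat M Y a \<and> sat M Z b)"
| "sat M X (And a b) = (sat M X a \<and> sat M X b)"
| "sat M X (Ex v a) = (\<exists>F. (\<forall>s\<in>X. F s \<noteq> {} \<and> F s \<subseteq> M) \<and>
                         sat M {s(v := Some m) | s m. s \<in> X \<and> m \<in> F s} a)"
| "sat M X (All v a) = sat M {s(v := Some m) | s m. s \<in> X \<and> m \<in> M} a"
| "sat M X (CDisj a b) = (sat M X a \<or> sat M X b)"

definition totality :: "nat \<Rightarrow> 'a set \<Rightarrow> 'a list set \<Rightarrow> bool" where
  "totality k' M R \<longleftrightarrow> R = tuples M k'"

definition definable ::
  "nat \<Rightarrow> ('a set \<times> 'a list set) set set \<Rightarrow> nat \<Rightarrow> ('a set \<Rightarrow> 'a list set \<Rightarrow> bool) \<Rightarrow> bool" where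
  "definable k \<D> k' E \<longleftrightarrow>
    (\<exists>\<theta> vs. wf_fml k \<D> \<theta> \<and> length vs = k' \<and> distinct vs \<and> fv \<theta> \<subseteq> set vs \<and>
      (\<forall>M V X. M \<noteq> {} \<longrightarrow> finite V \<longrightarrow> set vs \<subseteq> V \<longrightarrow> is_team M V X \<longrightarrow>
         (E M (team_rel X vs) \<longleftrightarrow> sat M X \<theta>)))"

end

theory Submission
  imports Defs
begin

text \<open>Satisfaction in a finite structure M is witnessed by small cores: whenever X satisfies
\<psi>, some D \<subseteq> X with at most (number of dependency atoms of \<psi>) \<sdot> |M|^k elements already forces
\<psi>, in the sense that every team between D and X satisfies \<psi>. For a dependency atom this is
because the k-ary relation X(w) has at most |M|^k tuples, each realised by one assignment;
first-order literals are flat, and the connectives and quantifiers only add up or pull back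
such cores. If \<theta> defined All_k', then the full team X over an n-element structure with
n = (atoms of \<theta>) + 2 would have a core D of size < n^(k+1) \<le> n^k' satisfying \<theta>, although
D(vs) cannot cover all n^k' tuples.\<close>

primrec num_dep_atoms :: "'d fml \<Rightarrow> nat" where
  "num_dep_atoms (Eq x y) = 0"
| "num_dep_atoms (NEq x y) = 0"
| "num_dep_atoms (Const vs) = 0"
| "num_dep_atoms (DAtom D vs) = 1"
| "num_dep_atoms (Or a b) = num_dep_atoms a + num_dep_atoms b"
| "num_dep_atoms (And a b) = num_dep_atoms a + num_dep_atoms b"
| "num_dep_atoms (Ex v a) = num_dep_atoms a"
| "num_dep_atoms (All v a) = num_dep_atoms a"
| "num_dep_atoms (CDisj a b) = num_dep_atoms a + num_dep_atoms b"

definition sat_between ::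
  "'a set \<Rightarrow> 'a team \<Rightarrow> 'a team \<Rightarrow> ('a set \<times> 'a list set) set fml \<Rightarrow> bool" where
  "sat_between M Y X \<psi> \<longleftrightarrow> (\<forall>Z. Y \<subseteq> Z \<longrightarrow> Z \<subseteq> X \<longrightarrow> sat M Z \<psi>)"

text \<open>Cores are taken relative to a part Y0 of X that is kept anyway, so that the cores of
the two conjuncts of a conjunction can be built one after the other.\<close>
definition has_core ::
  "'a set \<Rightarrow> nat \<Rightarrow> 'a team \<Rightarrow> 'a team \<Rightarrow> ('a set \<times> 'a list set) set fml \<Rightarrow> bool" where
  "has_core M n Y0 X \<psi> \<longleftrightarrow> (\<exists>D\<subseteq>X. finite D \<and> card D \<le> n \<and> sat_between M (Y0 \<union> D) X \<psi>)"

lemma team_rel_eq_image: "team_rel X w = (\<lambda>s. map (\<lambda>x. the (s x)) w) ` X"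
  unfolding team_rel_def by blast

text \<open>Variables outside the domain of an assignment are read as the junk value the None;
requiring it to lie in M keeps X(w) inside M^|w| without tracking domains.\<close>
lemma team_rel_subset_tuples:
  assumes "\<forall>s\<in>X. ran s \<subseteq> M" and "the None \<in> M"
  shows "team_rel X w \<subseteq> tuples M (length w)"
proof -
  have "the (s x) \<in> M" if "s \<in> X" for s x
    using assms that by (cases "s x") (auto simp: ran_def)
  then show ?thesis unfolding team_rel_def tuples_def by auto
qed

lemma finite_tuples: "finite M \<Longrightarrow> finite (tuples M n)"
  unfolding tuples_def using finite_lists_length_eq[of M n] by (simp add: conj_commute)

lemma card_tuples: "finite M \<Longrightarrow> card (tuples M n) = card M ^ n"
  unfolding tuples_def using card_lists_length_eq[of M n] by (simp add: conj_commute)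

lemma team_rel_full_team:
  assumes "distinct vs" and "the None \<in> M"
  shows "team_rel {s. dom s = set vs \<and> ran s \<subseteq> M} vs = tuples M (length vs)"
proof
  show "team_rel {s. dom s = set vs \<and> ran s \<subseteq> M} vs \<subseteq> tuples M (length vs)"
    by (rule team_rel_subset_tuples) (use assms(2) in auto)
next
  show "tuples M (length vs) \<subseteq> team_rel {s. dom s = set vs \<and> ran s \<subseteq> M} vs"
  proof
    fix t assume "t \<in> tuples M (length vs)"
    then have len: "length t = length vs" and "set t \<subseteq> M" unfolding tuples_def by auto
    define s where "s = map_of (zip vs t)"
    have "dom s = set vs \<and> ran s \<subseteq> M"
      unfolding s_def using len \<open>set t \<subseteq> M\<close> assms(1) by (simp add: ran_map_of_zip)
    moreover have "map (\<lambda>x. the (s x)) vs = t"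
      by (rule nth_equalityI) (use len assms(1) in \<open>auto simp: s_def map_of_zip_nth\<close>)
    ultimately show "t \<in> team_rel {s. dom s = set vs \<and> ran s \<subseteq> M} vs"
      unfolding team_rel_def by blast
  qed
qed

lemma supplement_eq_UN:
  "{s(v := Some m) | s m. s \<in> X \<and> m \<in> F s} = (\<Union>s\<in>X. (\<lambda>m. s(v := Some m)) ` F s)"
  by blast

lemma ran_fun_upd_Some_subset: "ran (s(v := Some m)) \<subseteq> insert m (ran s)"
  unfolding ran_def by auto

lemma ran_supplement_subset:
  assumes "\<forall>s\<in>X. ran s \<subseteq> M" and "\<forall>s\<in>X. F s \<subseteq> M"
  shows "\<forall>z\<in>(\<Union>s\<in>X. (\<lambda>m. s(v := Some m)) ` F s). ran z \<subseteq> M"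
  using assms ran_fun_upd_Some_subset by fastforce

lemma finite_subcover:
  assumes "D' \<subseteq> \<Union>(G ` X)" and "finite D'"
  obtains D where "D \<subseteq> X" "finite D" "card D \<le> card D'" "D' \<subseteq> \<Union>(G ` D)"
proof -
  have "D' \<subseteq> snd ` Sigma X G" using assms(1) by force
  then obtain U where U: "U \<subseteq> Sigma X G" "inj_on snd U" "D' = snd ` U"
    by (auto simp: subset_image_inj)
  have "finite U" using U(2,3) assms(2) by (simp add: finite_image_iff)
  have "card (fst ` U) \<le> card D'"
    using card_image_le[OF \<open>finite U\<close>, of fst] card_image[OF U(2)] U(3) by simp
  moreover have "D' \<subseteq> \<Union>(G ` fst ` U)" using U(1,3) by force
  moreover have "fst ` U \<subseteq> X" using U(1) by force
  ultimately show thesis using that \<open>finite U\<close> by blast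
qed

lemma has_core_mono: "has_core M n Y0 X \<psi> \<Longrightarrow> n \<le> m \<Longrightarrow> has_core M m Y0 X \<psi>"
  unfolding has_core_def by (meson order_trans)

lemma has_core_trivial: "sat_between M Y0 X \<psi> \<Longrightarrow> has_core M n Y0 X \<psi>"
  unfolding has_core_def by (intro exI[of _ "{}"]) simp

lemma has_core_CDisj:
  assumes "has_core M n Y0 X a \<or> has_core M n Y0 X b"
  shows "has_core M n Y0 X (CDisj a b)"
proof -
  have "sat_between M Y X (CDisj a b)" if "sat_between M Y X a \<or> sat_between M Y X b" for Y
    using that unfolding sat_between_def by auto
  then show ?thesis using assms unfolding has_core_def by blast
qed

lemma has_core_DAtom:
  assumes "sat M X (DAtom D w)" and "finite (team_rel X w)" and "card (team_rel X w) \<le> n"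
  shows "has_core M n Y0 X (DAtom D w)"
proof -
  let ?f = "\<lambda>s. map (\<lambda>x. the (s x)) w"
  obtain U where U: "U \<subseteq> X" "inj_on ?f U" "?f ` X = ?f ` U"
    using subset_image_inj[of "?f ` X" ?f X] by blast
  have rel_U: "team_rel X w = ?f ` U" using U(3) by (simp add: team_rel_eq_image)
  have "finite U" using U(2) assms(2) rel_U by (simp add: finite_image_iff)
  moreover have "card U \<le> n" using card_image[OF U(2)] assms(3) rel_U by simp
  moreover have "sat M Z (DAtom D w)" if "Y0 \<union> U \<subseteq> Z" "Z \<subseteq> X" for Z
  proof -
    have "team_rel Z w = team_rel X w"
      using rel_U that image_mono[of U Z ?f] image_mono[of Z X ?f] by (auto simp: team_rel_eq_image)
    then show ?thesis using assms(1) by simp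
  qed
  ultimately show ?thesis using U(1) unfolding has_core_def sat_between_def by blast
qed

lemma has_core_And:
  assumes "has_core M n Y0 X a" and "\<And>Y. Y \<subseteq> X \<Longrightarrow> has_core M m Y X b" and "Y0 \<subseteq> X"
  shows "has_core M (n + m) Y0 X (And a b)"
proof -
  obtain D1 where D1: "D1 \<subseteq> X" "finite D1" "card D1 \<le> n" "sat_between M (Y0 \<union> D1) X a"
    using assms(1) unfolding has_core_def by blast
  obtain D2 where D2: "D2 \<subseteq> X" "finite D2" "card D2 \<le> m" "sat_between M (Y0 \<union> D1 \<union> D2) X b"
    using assms(2)[of "Y0 \<union> D1"] D1(1) assms(3) unfolding has_core_def by blast
  have "card (D1 \<union> D2) \<le> n + m" using card_Un_le[of D1 D2] D1(3) D2(3) by linarith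
  moreover have "sat M Z (And a b)" if "Y0 \<union> (D1 \<union> D2) \<subseteq> Z" "Z \<subseteq> X" for Z
  proof -
    have "sat M Z a" using D1(4) that unfolding sat_between_def by blast
    moreover have "sat M Z b" using D2(4) that unfolding sat_between_def by blast
    ultimately show ?thesis by simp
  qed
  moreover have "D1 \<union> D2 \<subseteq> X" and "finite (D1 \<union> D2)" using D1(1,2) D2(1,2) by auto
  ultimately show ?thesis unfolding has_core_def sat_between_def by blast
qed

text \<open>Under lax semantics a split X = A \<union> B restricts to any Z \<subseteq> X as Z = (Z \<inter> A) \<union> (Z \<inter> B).\<close>
lemma has_core_Or:
  assumes "has_core M n (Y0 \<inter> A) A a" and "has_core M m (Y0 \<inter> B) B b" and "X = A \<union> B"
  shows "has_core M (n + m) Y0 X (Or a b)"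
proof -
  obtain D1 where D1: "D1 \<subseteq> A" "finite D1" "card D1 \<le> n" "sat_between M (Y0 \<inter> A \<union> D1) A a"
    using assms(1) unfolding has_core_def by blast
  obtain D2 where D2: "D2 \<subseteq> B" "finite D2" "card D2 \<le> m" "sat_between M (Y0 \<inter> B \<union> D2) B b"
    using assms(2) unfolding has_core_def by blast
  have "card (D1 \<union> D2) \<le> n + m" using card_Un_le[of D1 D2] D1(3) D2(3) by linarith
  moreover have "sat M Z (Or a b)" if "Y0 \<union> (D1 \<union> D2) \<subseteq> Z" "Z \<subseteq> X" for Z
  proof -
    have "Y0 \<inter> A \<union> D1 \<subseteq> Z \<inter> A" "Y0 \<inter> B \<union> D2 \<subseteq> Z \<inter> B" using that(1) D1(1) D2(1) by auto
    then have "sat M (Z \<inter> A) a" and "sat M (Z \<inter> B) b"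
      using D1(4) D2(4) unfolding sat_between_def by simp_all
    moreover have "Z = (Z \<inter> A) \<union> (Z \<inter> B)" using that(2) assms(3) by blast
    ultimately show ?thesis unfolding sat.simps by blast
  qed
  moreover have "D1 \<union> D2 \<subseteq> X" and "finite (D1 \<union> D2)" using D1(1,2) D2(1,2) assms(3) by auto
  ultimately show ?thesis unfolding has_core_def sat_between_def by blast
qed

text \<open>Both quantifiers pass from X to a supplement \<Union>s\<in>X. G s; a core there is covered by
the supplements of boundedly many assignments of X.\<close>
lemma has_core_supplement:
  assumes "has_core M n (\<Union>(G ` Y0)) (\<Union>(G ` X)) a"
  obtains D where "D \<subseteq> X" "finite D" "card D \<le> n"
    "\<forall>Z. Y0 \<union> D \<subseteq> Z \<longrightarrow> Z \<subseteq> X \<longrightarrow> sat M (\<Union>(G ` Z)) a"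
proof -
  obtain D' where D': "D' \<subseteq> \<Union>(G ` X)" "finite D'" "card D' \<le> n"
    "sat_between M (\<Union>(G ` Y0) \<union> D') (\<Union>(G ` X)) a"
    using assms unfolding has_core_def by blast
  obtain D where D: "D \<subseteq> X" "finite D" "card D \<le> card D'" "D' \<subseteq> \<Union>(G ` D)"
    using finite_subcover[OF D'(1,2)] .
  show thesis
  proof (rule that[OF D(1,2) le_trans[OF D(3) D'(3)]], intro allI impI)
    fix Z assume "Y0 \<union> D \<subseteq> Z" "Z \<subseteq> X"
    then have "\<Union>(G ` Y0) \<union> D' \<subseteq> \<Union>(G ` Z)" and "\<Union>(G ` Z) \<subseteq> \<Union>(G ` X)"
      using D(4) UN_mono[of Y0 Z G G] UN_mono[of D Z G G] UN_mono[of Z X G G] by auto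
    then show "sat M (\<Union>(G ` Z)) a" using D'(4) unfolding sat_between_def by blast
  qed
qed

lemma has_core_quantifier:
  assumes IH: "\<And>X Y0. \<forall>s\<in>X. ran s \<subseteq> M \<Longrightarrow> sat M X a \<Longrightarrow> Y0 \<subseteq> X \<Longrightarrow> has_core M n Y0 X a"
    and "\<forall>s\<in>X. ran s \<subseteq> M" and "\<forall>s\<in>X. F s \<subseteq> M"
    and "sat M (\<Union>s\<in>X. (\<lambda>m. s(v := Some m)) ` F s) a" and "Y0 \<subseteq> X"
  obtains D where "D \<subseteq> X" "finite D" "card D \<le> n"
    "\<forall>Z. Y0 \<union> D \<subseteq> Z \<longrightarrow> Z \<subseteq> X \<longrightarrow> sat M (\<Union>s\<in>Z. (\<lambda>m. s(v := Some m)) ` F s) a"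
proof (rule has_core_supplement)
  show "has_core M n (\<Union>s\<in>Y0. (\<lambda>m. s(v := Some m)) ` F s) (\<Union>s\<in>X. (\<lambda>m. s(v := Some m)) ` F s) a"
  proof (rule IH)
    show "\<forall>z\<in>(\<Union>s\<in>X. (\<lambda>m. s(v := Some m)) ` F s). ran z \<subseteq> M"
      using assms(2,3) by (rule ran_supplement_subset)
  qed (use assms(4,5) in blast)+
qed (rule that)

lemma sat_Ex_supplementI:
  assumes "\<forall>s\<in>X. F s \<noteq> {} \<and> F s \<subseteq> M" and "sat M (\<Union>s\<in>X. (\<lambda>m. s(v := Some m)) ` F s) a"
  shows "sat M X (Ex v a)"
  using assms unfolding sat.simps supplement_eq_UN by (intro exI[of _ F] conjI)

lemma sat_has_core:
  assumes "finite M" and "the None \<in> M"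
  shows "wf_fml k \<D> \<psi> \<Longrightarrow> \<forall>s\<in>X. ran s \<subseteq> M \<Longrightarrow> sat M X \<psi> \<Longrightarrow> Y0 \<subseteq> X \<Longrightarrow>
    has_core M (num_dep_atoms \<psi> * card M ^ k) Y0 X \<psi>"
proof (induction \<psi> arbitrary: X Y0)
  case (DAtom D w)
  have "length w = k" using DAtom.prems(1) by simp
  then have rel: "team_rel X w \<subseteq> tuples M k"
    using team_rel_subset_tuples[OF DAtom.prems(2) assms(2), of w] by simp
  show ?case
  proof (rule has_core_DAtom)
    show "finite (team_rel X w)" using rel finite_tuples[OF assms(1)] by (rule finite_subset)
    show "card (team_rel X w) \<le> num_dep_atoms (DAtom D w) * card M ^ k"
      using card_mono[OF finite_tuples[OF assms(1)] rel] card_tuples[OF assms(1)] by simp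
  qed (rule DAtom.prems(3))
next
  case (Or a b)
  have wf: "wf_fml k \<D> a" "wf_fml k \<D> b" using Or.prems(1) by simp_all
  from Or.prems(3) obtain A B where AB: "X = A \<union> B" "sat M A a" "sat M B b" by auto
  have "\<forall>s\<in>A. ran s \<subseteq> M" "\<forall>s\<in>B. ran s \<subseteq> M" using Or.prems(2) AB(1) by auto
  then have "has_core M (num_dep_atoms a * card M ^ k) (Y0 \<inter> A) A a"
    and "has_core M (num_dep_atoms b * card M ^ k) (Y0 \<inter> B) B b"
    using Or.IH(1)[OF wf(1) _ AB(2)] Or.IH(2)[OF wf(2) _ AB(3)] by simp_all
  then show ?case using has_core_Or[OF _ _ AB(1)] by (simp add: distrib_right)
next
  case (And a b)
  have wf: "wf_fml k \<D> a" "wf_fml k \<D> b" using And.prems(1) by simp_all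
  have sat: "sat M X a" "sat M X b" using And.prems(3) by simp_all
  have "has_core M (num_dep_atoms a * card M ^ k) Y0 X a"
    using And.IH(1)[OF wf(1) And.prems(2) sat(1) And.prems(4)] .
  moreover have "has_core M (num_dep_atoms b * card M ^ k) Y X b" if "Y \<subseteq> X" for Y
    using And.IH(2)[OF wf(2) And.prems(2) sat(2) that] .
  ultimately show ?case using has_core_And[OF _ _ And.prems(4)] by (simp add: distrib_right)
next
  case (CDisj a b)
  have wf: "wf_fml k \<D> a" "wf_fml k \<D> b" using CDisj.prems(1) by simp_all
  have "sat M X a \<or> sat M X b" using CDisj.prems(3) by simp
  then have "has_core M (num_dep_atoms a * card M ^ k) Y0 X a \<or>
      has_core M (num_dep_atoms b * card M ^ k) Y0 X b"
    using CDisj.IH(1)[OF wf(1) CDisj.prems(2) _ CDisj.prems(4)]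
      CDisj.IH(2)[OF wf(2) CDisj.prems(2) _ CDisj.prems(4)] by blast
  moreover have "num_dep_atoms a * card M ^ k \<le> num_dep_atoms (CDisj a b) * card M ^ k"
    and "num_dep_atoms b * card M ^ k \<le> num_dep_atoms (CDisj a b) * card M ^ k"
    by (simp_all add: distrib_right)
  ultimately show ?case by (meson has_core_CDisj has_core_mono)
next
  case (Ex v a)
  have "wf_fml k \<D> a" using Ex.prems(1) by simp
  note IH = Ex.IH[OF this]
  from Ex.prems(3) obtain F where F: "\<forall>s\<in>X. F s \<noteq> {} \<and> F s \<subseteq> M"
    and sat_supp: "sat M (\<Union>s\<in>X. (\<lambda>m. s(v := Some m)) ` F s) a"
    by (auto simp: supplement_eq_UN)
  have F_sub: "\<forall>s\<in>X. F s \<subseteq> M" using F by blast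
  obtain D where D: "D \<subseteq> X" "finite D" "card D \<le> num_dep_atoms a * card M ^ k"
    and core: "\<forall>Z. Y0 \<union> D \<subseteq> Z \<longrightarrow> Z \<subseteq> X \<longrightarrow> sat M (\<Union>s\<in>Z. (\<lambda>m. s(v := Some m)) ` F s) a"
    by (rule has_core_quantifier[OF IH Ex.prems(2) F_sub sat_supp Ex.prems(4)])
  have "sat M Z (Ex v a)" if "Y0 \<union> D \<subseteq> Z" "Z \<subseteq> X" for Z
  proof (rule sat_Ex_supplementI)
    show "\<forall>s\<in>Z. F s \<noteq> {} \<and> F s \<subseteq> M" using F that(2) by blast
    show "sat M (\<Union>s\<in>Z. (\<lambda>m. s(v := Some m)) ` F s) a" using core that by blast
  qed
  then show ?case unfolding has_core_def sat_between_def num_dep_atoms.simps using D by blast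
next
  case (All v a)
  have "wf_fml k \<D> a" using All.prems(1) by simp
  note IH = All.IH[OF this]
  have sat_supp: "sat M (\<Union>s\<in>X. (\<lambda>m. s(v := Some m)) ` M) a"
    using All.prems(3) by (simp add: supplement_eq_UN)
  obtain D where D: "D \<subseteq> X" "finite D" "card D \<le> num_dep_atoms a * card M ^ k"
    and core: "\<forall>Z. Y0 \<union> D \<subseteq> Z \<longrightarrow> Z \<subseteq> X \<longrightarrow> sat M (\<Union>s\<in>Z. (\<lambda>m. s(v := Some m)) ` M) a"
    by (rule has_core_quantifier[OF IH All.prems(2) _ sat_supp All.prems(4)]) auto
  have "sat M Z (All v a)" if "Y0 \<union> D \<subseteq> Z" "Z \<subseteq> X" for Z
    using core that by (simp add: supplement_eq_UN)
  then show ?case unfolding has_core_def sat_between_def num_dep_atoms.simps using D by blast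
next
  case (Eq x y)
  show ?case
    by (rule has_core_trivial) (use Eq.prems(3) in \<open>unfold sat_between_def sat.simps, blast\<close>)
next
  case (NEq x y)
  show ?case
    by (rule has_core_trivial) (use NEq.prems(3) in \<open>unfold sat_between_def sat.simps, blast\<close>)
next
  case (Const vs)
  show ?case
    by (rule has_core_trivial) (use Const.prems(3) in \<open>unfold sat_between_def sat.simps, blast\<close>)
qed

lemma ex_finite_card_Suc_containing:
  assumes "infinite (UNIV :: 'a set)"
  obtains M :: "'a set" where "finite M" "card M = Suc n" "a \<in> M"
proof -
  have "infinite (UNIV - {a})" using assms by simp
  then obtain B where B: "finite B" "card B = n" "B \<subseteq> UNIV - {a}"
    using infinite_arbitrarily_large by blast
  then have "card (insert a B) = Suc n" by (simp add: subset_Diff_insert)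
  then show thesis using that[of "insert a B"] B(1) by blast
qed

lemma card_tuples_le_card_team:
  assumes "finite M" and "finite D" and "team_rel D vs = tuples M n"
  shows "card M ^ n \<le> card D"
  using card_image_le[OF assms(2), of "\<lambda>s. map (\<lambda>x. the (s x)) vs"] assms
  by (simp add: card_tuples team_rel_eq_image[symmetric])

lemma mult_power_less_power:
  fixes c n :: nat
  assumes "c + 2 \<le> n" and "k < k'"
  shows "c * n ^ k < n ^ k'"
proof -
  have "c * n ^ k < n * n ^ k" using assms(1) by simp
  also have "\<dots> = n ^ Suc k" by simp
  also have "\<dots> \<le> n ^ k'" using assms by (intro power_increasing) auto
  finally show ?thesis .
qed

theorem mainTheorem3:
  fixes \<D> :: "('a set \<times> 'a list set) set set" and k k' :: nat
  assumes "infinite (UNIV :: 'a set)"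
    and "k < k'"
    and "\<forall>D\<in>\<D>. is_dep_notion k D \<and> upwards_closed k D"
  shows "\<not> definable k \<D> k' (totality k')"
proof
  assume "definable k \<D> k' (totality k')"
  then obtain \<theta> vs where \<theta>: "wf_fml k \<D> \<theta>" "length vs = k'" "distinct vs"
    and defn: "\<And>M V X. M \<noteq> {} \<Longrightarrow> finite V \<Longrightarrow> set vs \<subseteq> V \<Longrightarrow> is_team M V X \<Longrightarrow>
         totality k' M (team_rel X vs) \<longleftrightarrow> sat M X \<theta>"
    unfolding definable_def by blast
  define c where "c = num_dep_atoms \<theta>"
  obtain M :: "'a set" where M: "finite M" "card M = Suc (c + 1)" "the None \<in> M"
    by (rule ex_finite_card_Suc_containing[OF assms(1)])
  define X where "X = {s. dom s = set vs \<and> ran s \<subseteq> M}"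
  have sat_iff: "sat M Y \<theta> \<longleftrightarrow> team_rel Y vs = tuples M k'" if "Y \<subseteq> X" for Y
  proof -
    have "is_team M (set vs) Y" using that unfolding is_team_def X_def by blast
    then show ?thesis
      using defn[OF _ finite_set subset_refl] M(3) unfolding totality_def by blast
  qed
  have "sat M X \<theta>"
    using sat_iff[OF subset_refl] team_rel_full_team[OF \<theta>(3) M(3)] \<theta>(2) unfolding X_def by simp
  moreover have "\<forall>s\<in>X. ran s \<subseteq> M" unfolding X_def by blast
  ultimately obtain D where D: "D \<subseteq> X" "finite D" "card D \<le> c * card M ^ k"
    and "sat_between M D X \<theta>"
    using sat_has_core[OF M(1,3) \<theta>(1), of X "{}"] unfolding has_core_def c_def by auto
  then have "team_rel D vs = tuples M k'" using sat_iff unfolding sat_between_def by blast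
  then have "card M ^ k' \<le> card D" by (rule card_tuples_le_card_team[OF M(1) D(2)])
  moreover have "c * card M ^ k < card M ^ k'"
    using M(2) assms(2) by (intro mult_power_less_power) simp_all
  ultimately show False using D(3) by linarith
qed

end
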